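(* Let $x \in \mathbb{R}^n$ be deterministic, $y\in\mathbb{R}^n$ deterministic, and $f:\mathbb{R}^n\to\mathbb{R}^n$. Let $\tilde a,\tilde b,\tilde c$ be random vectors in $\mathbb{R}^n$ such that all $3n$ entries are mutually independent, $\mathbb{E}[\tilde a_i] = \mathbb{E}[\tilde b_i] = \mathbb{E}[\tilde c_i] = x_i$ for all $i$, and for each $i$ the variables $\tilde a_i,\tilde b_i,\tilde c_i$ have common finite central moments up to order six; denote by $\sigma_i^2$ their common variance and by $\mu_i^{[4]}$ their common fourth central moment. Let $\widetilde{\mathrm{uSE}}_i := (\tilde a_i - f(y)_i)^2 - \frac{(\tilde b_i - \tilde c_i)^2}{2}$. Then for every $1\le i\le n$, $$\mathrm{Var}[\widetilde{\mathrm{uSE}}_i] \ge \frac{\mu_i^{[4]} + \sigma_i^4}{2}.$$ *)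

theory Defs
  imports "HOL-Probability.Probability"
begin

definition entries3 :: "('a \<Rightarrow> real ^ 'n) \<Rightarrow> ('a \<Rightarrow> real ^ 'n) \<Rightarrow> ('a \<Rightarrow> real ^ 'n)
    \<Rightarrow> nat \<times> 'n \<Rightarrow> 'a \<Rightarrow> real" where
  "entries3 A B C = (\<lambda>(k, i) \<omega>. if k = 0 then A \<omega> $ i else if k = 1 then B \<omega> $ i else C \<omega> $ i)"

end

theory Submission
  imports Defs
begin

text \<open>
  Write the estimator as \<open>S - T\<close> with \<open>S = (a - f(y))\<^sup>2\<close> and \<open>T = (b - c)\<^sup>2 / 2\<close>. Since \<open>S\<close>
  depends only on \<open>a\<close> and \<open>T\<close> only on \<open>(b, c)\<close>, independence gives
  \<open>Var(S - T) = Var S + Var T \<ge> Var T\<close>. For centred independent \<open>b, c\<close> with common second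
  and fourth moments \<open>\<sigma>\<^sup>2, \<mu>\<^sub>4\<close> one has \<open>E (b - c)\<^sup>2 = 2\<sigma>\<^sup>2\<close> and
  \<open>E (b - c)\<^sup>4 = 2\<mu>\<^sub>4 + 6\<sigma>\<^sup>4\<close>, hence \<open>Var T = (\<mu>\<^sub>4 + \<sigma>\<^sup>4) / 2\<close>.
\<close>

lemma (in prob_space) indep_vars_imp_indep_var_comp:
  assumes "indep_vars M' X I" "i \<in> I" "j \<in> I" "i \<noteq> j"
    and "g \<in> measurable (M' i) N1" "h \<in> measurable (M' j) N2"
  shows "indep_var N1 (\<lambda>\<omega>. g (X i \<omega>)) N2 (\<lambda>\<omega>. h (X j \<omega>))"
proof -
  have "indep_var N1 ((\<lambda>v. g (v i)) \<circ> (\<lambda>\<omega>. restrict (\<lambda>l. X l \<omega>) {i}))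
                  N2 ((\<lambda>v. h (v j)) \<circ> (\<lambda>\<omega>. restrict (\<lambda>l. X l \<omega>) {j}))"
    using assms by (intro indep_var_compose[OF indep_var_restrict]) auto
  then show ?thesis
    by (simp add: comp_def)
qed

lemma (in prob_space) indep_vars_imp_indep_var_comp_pair:
  assumes "indep_vars M' X I" "{i, j, k} \<subseteq> I" "i \<notin> {j, k}"
    and "g \<in> measurable (M' i) N1" "h \<in> measurable (M' j \<Otimes>\<^sub>M M' k) N2"
  shows "indep_var N1 (\<lambda>\<omega>. g (X i \<omega>)) N2 (\<lambda>\<omega>. h (X j \<omega>, X k \<omega>))"
proof -
  have "(\<lambda>v. h (v j, v k)) \<in> measurable (PiM {j, k} M') N2"
    using assms(5) by measurable
  then have "indep_var N1 ((\<lambda>v. g (v i)) \<circ> (\<lambda>\<omega>. restrict (\<lambda>l. X l \<omega>) {i}))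
                  N2 ((\<lambda>v. h (v j, v k)) \<circ> (\<lambda>\<omega>. restrict (\<lambda>l. X l \<omega>) {j, k}))"
    using assms by (intro indep_var_compose[OF indep_var_restrict]) auto
  then show ?thesis
    by (simp add: comp_def)
qed

lemma integrable_power_add_const:
  fixes X :: "'a \<Rightarrow> real"
  assumes "\<And>k. k \<le> n \<Longrightarrow> integrable M (\<lambda>\<omega>. X \<omega> ^ k)"
  shows "integrable M (\<lambda>\<omega>. (X \<omega> + c) ^ n)"
  unfolding binomial_ring
  by (auto intro!: integrable_sum integrable_mult_left integrable_mult_right assms)

lemma (in prob_space) expectation_centered_eq_0:
  fixes X :: "'a \<Rightarrow> real"
  assumes "integrable M (\<lambda>\<omega>. X \<omega> - c)" "expectation X = c"
  shows "expectation (\<lambda>\<omega>. X \<omega> - c) = 0"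
proof -
  have "integrable M X"
    using Bochner_Integration.integrable_add[OF assms(1), of "\<lambda>_. c"] by simp
  then show ?thesis
    using assms(2) by (simp add: prob_space)
qed

lemma (in prob_space) indep_var_power_mult:
  fixes X Y :: "'a \<Rightarrow> real"
  assumes "indep_var borel X borel Y"
    and "integrable M (\<lambda>\<omega>. X \<omega> ^ a)" "integrable M (\<lambda>\<omega>. Y \<omega> ^ b)"
  shows "integrable M (\<lambda>\<omega>. X \<omega> ^ a * Y \<omega> ^ b)"
    and "expectation (\<lambda>\<omega>. X \<omega> ^ a * Y \<omega> ^ b)
           = expectation (\<lambda>\<omega>. X \<omega> ^ a) * expectation (\<lambda>\<omega>. Y \<omega> ^ b)"
proof -
  have "indep_var borel ((\<lambda>v. v ^ a) \<circ> X) borel ((\<lambda>v. v ^ b) \<circ> Y)"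
    using assms(1) by (rule indep_var_compose) auto
  then have indep: "indep_var borel (\<lambda>\<omega>. X \<omega> ^ a) borel (\<lambda>\<omega>. Y \<omega> ^ b)"
    by (simp add: comp_def)
  show "integrable M (\<lambda>\<omega>. X \<omega> ^ a * Y \<omega> ^ b)"
    using indep assms(2,3) by (rule indep_var_integrable)
  show "expectation (\<lambda>\<omega>. X \<omega> ^ a * Y \<omega> ^ b)
          = expectation (\<lambda>\<omega>. X \<omega> ^ a) * expectation (\<lambda>\<omega>. Y \<omega> ^ b)"
    using indep assms(2,3) by (rule indep_var_lebesgue_integral)
qed

lemma (in prob_space) variance_diff_indep:
  fixes X Y :: "'a \<Rightarrow> real"
  assumes indep: "indep_var borel X borel Y"
    and "integrable M (\<lambda>\<omega>. (X \<omega>)\<^sup>2)" "integrable M (\<lambda>\<omega>. (Y \<omega>)\<^sup>2)"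
  shows "variance (\<lambda>\<omega>. X \<omega> - Y \<omega>) = variance X + variance Y"
proof -
  have [measurable]: "random_variable borel X" "random_variable borel Y"
    using indep by (blast dest: indep_var_rv1 indep_var_rv2)+
  have [simp]: "integrable M X" "integrable M Y"
    using assms(2,3) by (auto intro: square_integrable_imp_integrable)
  define X' where "X' = (\<lambda>\<omega>. X \<omega> - expectation X)"
  define Y' where "Y' = (\<lambda>\<omega>. Y \<omega> - expectation Y)"
  have int_X': "integrable M (\<lambda>\<omega>. X' \<omega> ^ k)" if "k \<le> 2" for k
    unfolding X'_def diff_conv_add_uminus
    by (rule integrable_power_add_const) (use that assms(2) in \<open>auto simp: le_Suc_eq numeral_2_eq_2\<close>)
  have int_Y': "integrable M (\<lambda>\<omega>. Y' \<omega> ^ k)" if "k \<le> 2" for k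
    unfolding Y'_def diff_conv_add_uminus
    by (rule integrable_power_add_const) (use that assms(3) in \<open>auto simp: le_Suc_eq numeral_2_eq_2\<close>)
  have "indep_var borel ((\<lambda>v. v - expectation X) \<circ> X) borel ((\<lambda>v. v - expectation Y) \<circ> Y)"
    using indep by (rule indep_var_compose) auto
  then have indep': "indep_var borel X' borel Y'"
    by (simp add: comp_def X'_def Y'_def)
  have "expectation X' = 0"
    by (simp add: X'_def prob_space)
  then have uncorrelated: "expectation (\<lambda>\<omega>. X' \<omega> ^ 1 * Y' \<omega> ^ 1) = 0"
    using indep_var_power_mult(2)[OF indep' int_X'[of 1] int_Y'[of 1]] by simp
  have "(\<lambda>\<omega>. (X \<omega> - Y \<omega> - expectation (\<lambda>\<omega>. X \<omega> - Y \<omega>))\<^sup>2)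
      = (\<lambda>\<omega>. X' \<omega> ^ 2 + Y' \<omega> ^ 2 - 2 * (X' \<omega> ^ 1 * Y' \<omega> ^ 1))"
    by (simp add: X'_def Y'_def fun_eq_iff power2_eq_square algebra_simps)
  then show ?thesis
    using int_X' int_Y' indep_var_power_mult(1)[OF indep' int_X'[of 1] int_Y'[of 1]] uncorrelated
    by (simp add: X'_def Y'_def)
qed

lemma (in prob_space) variance_half_square_diff:
  fixes X Y :: "'a \<Rightarrow> real"
  assumes indep: "indep_var borel X borel Y"
    and int_X: "\<And>k. k \<le> 4 \<Longrightarrow> integrable M (\<lambda>\<omega>. X \<omega> ^ k)"
    and int_Y: "\<And>k. k \<le> 4 \<Longrightarrow> integrable M (\<lambda>\<omega>. Y \<omega> ^ k)"
    and mean_X: "expectation X = 0" and mean_Y: "expectation Y = 0"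
    and mom2: "expectation (\<lambda>\<omega>. Y \<omega> ^ 2) = expectation (\<lambda>\<omega>. X \<omega> ^ 2)"
    and mom4: "expectation (\<lambda>\<omega>. Y \<omega> ^ 4) = expectation (\<lambda>\<omega>. X \<omega> ^ 4)"
  shows "integrable M (\<lambda>\<omega>. ((X \<omega> - Y \<omega>)\<^sup>2 / 2)\<^sup>2)"
    and "variance (\<lambda>\<omega>. (X \<omega> - Y \<omega>)\<^sup>2 / 2)
           = (expectation (\<lambda>\<omega>. X \<omega> ^ 4) + (expectation (\<lambda>\<omega>. X \<omega> ^ 2))\<^sup>2) / 2"
proof -
  define mixed where "mixed a b \<omega> = X \<omega> ^ a * Y \<omega> ^ b" for a b :: nat and \<omega>
  define m where "m k = expectation (\<lambda>\<omega>. X \<omega> ^ k)" for k :: nat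
  have int_mixed: "integrable M (mixed a b)" if "a \<le> 4" "b \<le> 4" for a b
    unfolding mixed_def using indep int_X[OF \<open>a \<le> 4\<close>] int_Y[OF \<open>b \<le> 4\<close>]
    by (rule indep_var_power_mult)
  have E_mixed: "expectation (mixed a b) = expectation (\<lambda>\<omega>. X \<omega> ^ a) * expectation (\<lambda>\<omega>. Y \<omega> ^ b)"
    if "a \<le> 4" "b \<le> 4" for a b
    unfolding mixed_def using indep int_X[OF \<open>a \<le> 4\<close>] int_Y[OF \<open>b \<le> 4\<close>]
    by (rule indep_var_power_mult)
  have int_mixed': "integrable M (\<lambda>\<omega>. c * mixed a b \<omega>)" if "a \<le> 4" "b \<le> 4" for a b c
    using int_mixed[OF that] by simp
  note calc = int_mixed int_mixed' E_mixed mean_X mean_Y mom2 mom4 prob_space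
  have square: "(\<lambda>\<omega>. (X \<omega> - Y \<omega>)\<^sup>2 / 2) = (\<lambda>\<omega>. (1/2) * mixed 2 0 \<omega> - mixed 1 1 \<omega> + (1/2) * mixed 0 2 \<omega>)"
    by (simp add: fun_eq_iff mixed_def power2_eq_square field_simps)
  have fourth: "(\<lambda>\<omega>. ((X \<omega> - Y \<omega>)\<^sup>2 / 2)\<^sup>2) = (\<lambda>\<omega>. (1/4) * mixed 4 0 \<omega> - mixed 3 1 \<omega>
      + (3/2) * mixed 2 2 \<omega> - mixed 1 3 \<omega> + (1/4) * mixed 0 4 \<omega>)"
    by (simp add: fun_eq_iff mixed_def power2_eq_square field_simps power_numeral_reduce)
  show int_fourth: "integrable M (\<lambda>\<omega>. ((X \<omega> - Y \<omega>)\<^sup>2 / 2)\<^sup>2)"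
    unfolding fourth by (simp add: calc)
  have int_square: "integrable M (\<lambda>\<omega>. (X \<omega> - Y \<omega>)\<^sup>2 / 2)"
    unfolding square by (simp add: calc)
  have E_square: "expectation (\<lambda>\<omega>. (X \<omega> - Y \<omega>)\<^sup>2 / 2) = m 2"
    unfolding square by (simp add: calc m_def)
  have E_fourth: "expectation (\<lambda>\<omega>. ((X \<omega> - Y \<omega>)\<^sup>2 / 2)\<^sup>2) = m 4 / 2 + 3/2 * (m 2)\<^sup>2"
    unfolding fourth by (simp add: calc m_def) (simp add: power2_eq_square)
  have "variance (\<lambda>\<omega>. (X \<omega> - Y \<omega>)\<^sup>2 / 2)
      = expectation (\<lambda>\<omega>. ((X \<omega> - Y \<omega>)\<^sup>2 / 2)\<^sup>2) - (expectation (\<lambda>\<omega>. (X \<omega> - Y \<omega>)\<^sup>2 / 2))\<^sup>2"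
    using int_square int_fourth by (rule variance_eq)
  also have "\<dots> = (m 4 + (m 2)\<^sup>2) / 2"
    unfolding E_square E_fourth by simp
  finally show "variance (\<lambda>\<omega>. (X \<omega> - Y \<omega>)\<^sup>2 / 2) = (m 4 + (m 2)\<^sup>2) / 2" .
qed

theorem lemmaE4:
  fixes M :: "'a measure"
    and x y :: "real ^ 'n"
    and f :: "real ^ 'n \<Rightarrow> real ^ 'n"
    and A B C :: "'a \<Rightarrow> real ^ 'n"
    and i :: 'n
  assumes "prob_space M"
    and indep: "prob_space.indep_vars M (\<lambda>_. borel) (entries3 A B C) ({0, 1, 2} \<times> UNIV)"
    and meanA: "\<forall>j. prob_space.expectation M (\<lambda>\<omega>. A \<omega> $ j) = x $ j"
    and meanB: "\<forall>j. prob_space.expectation M (\<lambda>\<omega>. B \<omega> $ j) = x $ j"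
    and meanC: "\<forall>j. prob_space.expectation M (\<lambda>\<omega>. C \<omega> $ j) = x $ j"
    and finA: "\<forall>j. \<forall>k\<in>{1..6::nat}. integrable M (\<lambda>\<omega>. (A \<omega> $ j - x $ j) ^ k)"
    and finB: "\<forall>j. \<forall>k\<in>{1..6::nat}. integrable M (\<lambda>\<omega>. (B \<omega> $ j - x $ j) ^ k)"
    and finC: "\<forall>j. \<forall>k\<in>{1..6::nat}. integrable M (\<lambda>\<omega>. (C \<omega> $ j - x $ j) ^ k)"
    and momAB: "\<forall>j. \<forall>k\<in>{1..6::nat}.
       prob_space.expectation M (\<lambda>\<omega>. (A \<omega> $ j - x $ j) ^ k)
     = prob_space.expectation M (\<lambda>\<omega>. (B \<omega> $ j - x $ j) ^ k)"
    and momAC: "\<forall>j. \<forall>k\<in>{1..6::nat}.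
       prob_space.expectation M (\<lambda>\<omega>. (A \<omega> $ j - x $ j) ^ k)
     = prob_space.expectation M (\<lambda>\<omega>. (C \<omega> $ j - x $ j) ^ k)"
  shows "prob_space.variance M (\<lambda>\<omega>. (A \<omega> $ i - f y $ i)\<^sup>2 - (B \<omega> $ i - C \<omega> $ i)\<^sup>2 / 2)
     \<ge> (prob_space.expectation M (\<lambda>\<omega>. (A \<omega> $ i - x $ i) ^ 4)
         + (prob_space.variance M (\<lambda>\<omega>. A \<omega> $ i))\<^sup>2) / 2"
proof -
  interpret prob_space M by fact
  define s where "s = (\<lambda>\<omega>. A \<omega> $ i - x $ i)"
  define t where "t = (\<lambda>\<omega>. B \<omega> $ i - x $ i)"
  define u where "u = (\<lambda>\<omega>. C \<omega> $ i - x $ i)"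
  have int_s: "integrable M (\<lambda>\<omega>. s \<omega> ^ k)" if "k \<le> 4" for k
    using finA that by (cases "k = 0") (auto simp: s_def)
  have int_t: "integrable M (\<lambda>\<omega>. t \<omega> ^ k)" if "k \<le> 4" for k
    using finB that by (cases "k = 0") (auto simp: t_def)
  have int_u: "integrable M (\<lambda>\<omega>. u \<omega> ^ k)" if "k \<le> 4" for k
    using finC that by (cases "k = 0") (auto simp: u_def)
  have indep_parts: "indep_var borel (\<lambda>\<omega>. (A \<omega> $ i - f y $ i)\<^sup>2) borel (\<lambda>\<omega>. (t \<omega> - u \<omega>)\<^sup>2 / 2)"
    using indep_vars_imp_indep_var_comp_pair[OF indep, of "(0, i)" "(1, i)" "(2, i)"
        "\<lambda>a. (a - f y $ i)\<^sup>2" borel "\<lambda>(b, c). (b - c)\<^sup>2 / 2" borel]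
    by (simp add: entries3_def t_def u_def)
  have indep_tu: "indep_var borel t borel u"
    using indep_vars_imp_indep_var_comp[OF indep, of "(1, i)" "(2, i)"
        "\<lambda>b. b - x $ i" borel "\<lambda>c. c - x $ i" borel]
    by (simp add: entries3_def t_def u_def)
  have mom_t: "expectation (\<lambda>\<omega>. t \<omega> ^ k) = expectation (\<lambda>\<omega>. s \<omega> ^ k)" if "k \<in> {1..6}" for k
    using momAB that by (simp add: s_def t_def)
  have mom_u: "expectation (\<lambda>\<omega>. u \<omega> ^ k) = expectation (\<lambda>\<omega>. t \<omega> ^ k)" if "k \<in> {1..6}" for k
    using momAB momAC that by (simp add: s_def t_def u_def)
  have "(\<lambda>\<omega>. ((A \<omega> $ i - f y $ i)\<^sup>2)\<^sup>2) = (\<lambda>\<omega>. (s \<omega> + (x $ i - f y $ i)) ^ 4)"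
    by (simp add: s_def fun_eq_iff flip: power_mult)
  then have int_square: "integrable M (\<lambda>\<omega>. ((A \<omega> $ i - f y $ i)\<^sup>2)\<^sup>2)"
    using integrable_power_add_const[OF int_s] by simp
  have mean_t: "expectation t = 0"
    using int_t[of 1] meanB unfolding t_def by (intro expectation_centered_eq_0) auto
  have mean_u: "expectation u = 0"
    using int_u[of 1] meanC unfolding u_def by (intro expectation_centered_eq_0) auto
  note half_square = variance_half_square_diff[OF indep_tu int_t int_u mean_t mean_u
      mom_u[of 2, simplified] mom_u[of 4, simplified]]
  have "variance (\<lambda>\<omega>. (A \<omega> $ i - f y $ i)\<^sup>2 - (B \<omega> $ i - C \<omega> $ i)\<^sup>2 / 2)
      = variance (\<lambda>\<omega>. (A \<omega> $ i - f y $ i)\<^sup>2) + variance (\<lambda>\<omega>. (t \<omega> - u \<omega>)\<^sup>2 / 2)"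
    using variance_diff_indep[OF indep_parts int_square half_square(1)] by (simp add: t_def u_def)
  also have "\<dots> \<ge> variance (\<lambda>\<omega>. (t \<omega> - u \<omega>)\<^sup>2 / 2)"
    by (simp add: variance_positive)
  finally show ?thesis
    using half_square(2) mom_t meanA by (simp add: s_def)
qed

end
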